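(* Let $(\Omega,\mathcal{F},\mu)$ be a probability space and $\mathcal{C},\mathcal{G},\mathcal{H}$ sub-$\sigma$-algebras of $\mathcal{F}$ with $\mathcal{C}\subset\mathcal{G}$ and $\mathcal{C}\subset\mathcal{H}$. Let $f$ be an $\mathcal{H}$-measurable function with $|f|\le g$ a.e. for some (finite-valued) $\mathcal{C}$-measurable function $g$. Then, almost everywhere, $$|\mathbb{E}[f|\mathcal{G}]-\mathbb{E}[f|\mathcal{C}]|\le 2\,\varphi_{\mathcal{C}}(\mathcal{G},\mathcal{H})\,g.$$
   Context: Functions are identified when equal a.e. Conditional expectations are understood in the generalized sense: for $f$ with $|f|\le g$, $g$ $\mathcal{C}$-measurable and $\mathcal{C}\subset\mathcal{G}$, $\mathbb{E}[f|\mathcal{G}]:=\lim_{n\to\infty}\mathbb{E}[f\mathbb{I}_{\{g\le n\}}|\mathcal{G}]$ a.e. For a measurable $h$, let $\|h\|_{\mathcal{C},\infty}$ denote the smallest (a.e.) $\mathcal{C}$-measurable function $k\ge 0$ with $|h|\le k$ a.e. (the infimum in the lattice of a.e.-classes). The $\mathcal{C}$-conditioned uniform mixing coefficient is $$\varphi_{\mathcal{C}}(\mathcal{G},\mathcal{H}):=\sup_{B\in\mathcal{H}}\big\|\mathbb{E}[\mathbb{I}_B|\mathcal{G}]-\mathbb{E}[\mathbb{I}_B|\mathcal{C}]\big\|_{\mathcal{C},\infty},$$ the supremum taken in the lattice of a.e.-classes of measurable functions. *)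

theory Defs
  imports "HOL-Probability.Probability"
begin

definition gen_cond_exp :: "'a measure \<Rightarrow> 'a measure \<Rightarrow> ('a \<Rightarrow> real) \<Rightarrow> ('a \<Rightarrow> real) \<Rightarrow> ('a \<Rightarrow> real)" where
  "gen_cond_exp M G g f =
     (\<lambda>x. lim (\<lambda>n::nat. real_cond_exp M G (\<lambda>y. f y * indicator {y. g y \<le> real n} y) x))"

definition is_cond_sup_norm :: "'a measure \<Rightarrow> 'a measure \<Rightarrow> ('a \<Rightarrow> real) \<Rightarrow> ('a \<Rightarrow> real) \<Rightarrow> bool" where
  "is_cond_sup_norm M C h k \<longleftrightarrow>
     k \<in> borel_measurable C \<and> (AE x in M. 0 \<le> k x) \<and> (AE x in M. \<bar>h x\<bar> \<le> k x) \<and>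
     (\<forall>k'. k' \<in> borel_measurable C \<and> (AE x in M. 0 \<le> k' x) \<and> (AE x in M. \<bar>h x\<bar> \<le> k' x)
            \<longrightarrow> (AE x in M. k x \<le> k' x))"

(* \<phi> is (a representative of) the C-conditioned uniform mixing coefficient
  \<phi>_C(G,H) = sup_{B \<in> H} condsupnorm(E[1_B|G] - E[1_B|C]), the supremum being taken in the
  lattice of a.e.-classes of measurable functions. *)
definition is_cond_phi_mixing :: "'a measure \<Rightarrow> 'a measure \<Rightarrow> 'a measure \<Rightarrow> 'a measure \<Rightarrow> ('a \<Rightarrow> real) \<Rightarrow> bool" where
  "is_cond_phi_mixing M C G H \<phi> \<longleftrightarrow>
     \<phi> \<in> borel_measurable M \<and>
     (\<forall>B\<in>sets H. \<forall>k. is_cond_sup_norm M C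
          (\<lambda>x. real_cond_exp M G (indicator B) x - real_cond_exp M C (indicator B) x) k
          \<longrightarrow> (AE x in M. k x \<le> \<phi> x)) \<and>
     (\<forall>\<psi>. \<psi> \<in> borel_measurable M \<and>
          (\<forall>B\<in>sets H. \<forall>k. is_cond_sup_norm M C
              (\<lambda>x. real_cond_exp M G (indicator B) x - real_cond_exp M C (indicator B) x) k
              \<longrightarrow> (AE x in M. k x \<le> \<psi> x))
          \<longrightarrow> (AE x in M. \<phi> x \<le> \<psi> x))"

end

theory Submission
  imports Defs
begin

text \<open>
  Write \<open>f = g h\<close> with \<open>h\<close> \<open>\<H>\<close>-measurable and \<open>|h| \<le> 1\<close>. Since \<open>g\<close> is \<open>\<C>\<close>-measurable, it factors
  out of both generalized conditional expectations, so it suffices to bound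
  \<open>|E[h|\<G>] - E[h|\<C>]|\<close> by \<open>2 \<phi>\<close>. For an indicator \<open>h = 1\<^sub>B\<close>, \<open>B \<in> \<H>\<close>, the bound \<open>\<phi>\<close> is the definition
  of \<open>\<phi>\<close>, once one knows that the conditional sup-norm of the difference exists; it is obtained
  as the majorant of least integral. By linearity the bound passes to averages of indicators, hence
  to \<open>\<lfloor>n h\<rfloor>/n\<close> for \<open>0 \<le> h \<le> 1\<close>, which is the average of the indicators of the level sets
  \<open>{n h \<ge> i}\<close> and lies within \<open>1/n\<close> of \<open>h\<close>. Splitting a general \<open>h\<close> into positive and negative
  parts costs the factor 2.
\<close>

lemma finite_measure_sigma_finite_subalgebra:
  assumes "finite_measure M" and "subalgebra M F"
  shows "sigma_finite_subalgebra M F"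
  using assms by (intro finite_measure_subalgebra_is_sigma_finite)
    (simp add: finite_measure_subalgebra_def finite_measure_subalgebra_axioms_def)

definition bounded_majorants :: "'a measure \<Rightarrow> 'a measure \<Rightarrow> ('a \<Rightarrow> real) \<Rightarrow> real \<Rightarrow> ('a \<Rightarrow> real) set" where
  "bounded_majorants M C h c =
     {k \<in> borel_measurable C. (\<forall>x. 0 \<le> k x \<and> k x \<le> c) \<and> (AE x in M. \<bar>h x\<bar> \<le> k x)}"

lemma integrable_bounded_majorant:
  assumes "finite_measure M" and "subalgebra M C" and "k \<in> bounded_majorants M C h c"
  shows "integrable M k"
proof -
  interpret finite_measure M by fact
  have "k \<in> borel_measurable M"
    using assms(3) measurable_from_subalg[OF assms(2)] by (auto simp: bounded_majorants_def)
  then show ?thesis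
    using assms(3) by (intro integrable_const_bound[where B=c]) (auto simp: bounded_majorants_def)
qed

lemma INF_in_bounded_majorants:
  assumes "\<And>n::nat. ks n \<in> bounded_majorants M C h c"
  shows "(\<lambda>x. INF n. ks n x) \<in> bounded_majorants M C h c"
proof -
  have [measurable]: "ks n \<in> borel_measurable C" for n
    using assms by (auto simp: bounded_majorants_def)
  have bdd: "bdd_below (range (\<lambda>n. ks n x))" for x
    using assms by (intro bdd_belowI[of _ 0]) (auto simp: bounded_majorants_def)
  have "0 \<le> (INF n. ks n x)" for x
    using assms by (intro cINF_greatest) (auto simp: bounded_majorants_def)
  moreover have "(INF n. ks n x) \<le> c" for x
    using cINF_lower[OF bdd, of 0 x] assms[of 0] unfolding bounded_majorants_def
    by (smt (verit) UNIV_I mem_Collect_eq)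
  moreover have "AE x in M. \<forall>n. \<bar>h x\<bar> \<le> ks n x"
    using assms by (auto simp: bounded_majorants_def AE_all_countable)
  then have "AE x in M. \<bar>h x\<bar> \<le> (INF n. ks n x)"
    by eventually_elim (auto intro: cINF_greatest)
  ultimately show ?thesis by (auto simp: bounded_majorants_def)
qed

lemma integral_minimal_bounded_majorant_exists:
  assumes "finite_measure M" and "subalgebra M C" and "bounded_majorants M C h c \<noteq> {}"
  shows "\<exists>K \<in> bounded_majorants M C h c. \<forall>k \<in> bounded_majorants M C h c. integral\<^sup>L M K \<le> integral\<^sup>L M k"
proof -
  let ?B = "bounded_majorants M C h c"
  define m where "m = (INF k\<in>?B. integral\<^sup>L M k)"
  have bdd: "bdd_below ((\<lambda>k. integral\<^sup>L M k) ` ?B)"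
    by (intro bdd_belowI[of _ 0]) (auto simp: bounded_majorants_def intro!: integral_nonneg_AE)
  have m_le: "m \<le> integral\<^sup>L M k" if "k \<in> ?B" for k
    unfolding m_def using bdd that by (rule cINF_lower)
  have "\<exists>k\<in>?B. integral\<^sup>L M k < m + 1 / Suc n" for n :: nat
    using cINF_less_iff[OF assms(3) bdd, of "m + 1 / Suc n"] unfolding m_def by simp
  then obtain ks where ks: "\<And>n. ks n \<in> ?B" and ks_int: "\<And>n. integral\<^sup>L M (ks n) < m + 1 / Suc n"
    by metis
  define K where "K x = (INF n. ks n x)" for x
  have K: "K \<in> ?B" unfolding K_def by (rule INF_in_bounded_majorants[OF ks])
  have "integral\<^sup>L M K \<le> m"
  proof (rule field_le_epsilon)
    fix e :: real assume "0 < e"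
    then obtain n where n: "inverse (of_nat (Suc n)) < e" using reals_Archimedean by blast
    have "K x \<le> ks n x" for x
      unfolding K_def using ks by (intro cINF_lower bdd_belowI[of _ 0]) (auto simp: bounded_majorants_def)
    then have "integral\<^sup>L M K \<le> integral\<^sup>L M (ks n)"
      using integrable_bounded_majorant[OF assms(1,2)] K ks by (intro integral_mono) blast+
    also have "\<dots> \<le> m + e" using ks_int[of n] n by (simp add: inverse_eq_divide)
    finally show "integral\<^sup>L M K \<le> m + e" .
  qed
  then show ?thesis using K m_le by force
qed

lemma cond_sup_norm_exists:
  assumes "finite_measure M" and sub: "subalgebra M C" and h_bounded: "AE x in M. \<bar>h x\<bar> \<le> c"
  shows "\<exists>k. is_cond_sup_norm M C h k"
proof -
  interpret finite_measure M by fact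
  let ?B = "bounded_majorants M C h (max 0 c)"
  have "(\<lambda>_. max 0 c) \<in> ?B"
    using h_bounded by (auto simp: bounded_majorants_def elim: eventually_mono)
  then obtain K where K: "K \<in> ?B" and K_min: "\<And>k. k \<in> ?B \<Longrightarrow> integral\<^sup>L M K \<le> integral\<^sup>L M k"
    using integral_minimal_bounded_majorant_exists[OF assms(1) sub, of h "max 0 c"] by blast
  have K_meas [measurable]: "K \<in> borel_measurable C" and K_bounds: "\<And>x. 0 \<le> K x \<and> K x \<le> max 0 c"
    and K_major: "AE x in M. \<bar>h x\<bar> \<le> K x"
    using K by (auto simp: bounded_majorants_def)
  have "AE x in M. K x \<le> k x"
    if [measurable]: "k \<in> borel_measurable C" and k_nonneg: "AE x in M. 0 \<le> k x"
      and k_major: "AE x in M. \<bar>h x\<bar> \<le> k x" for k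
  proof -
    \<comment> \<open>\<open>min K k\<close> is again a bounded majorant, so by minimality it has the integral of \<open>K\<close>.\<close>
    define K' where "K' x = max 0 (min (K x) (k x))" for x
    have "AE x in M. \<bar>h x\<bar> \<le> K' x"
      using K_major k_major by eventually_elim (simp add: K'_def)
    moreover have "0 \<le> K' x \<and> K' x \<le> max 0 c" for x
      using K_bounds[of x] by (simp add: K'_def min_le_iff_disj)
    ultimately have K': "K' \<in> ?B"
      unfolding bounded_majorants_def K'_def by simp
    have K'_le: "K' x \<le> K x" for x
      using K_bounds[of x] by (simp add: K'_def)
    have int: "integrable M K" "integrable M K'"
      using integrable_bounded_majorant[OF assms(1) sub] K K' by blast+
    have "integral\<^sup>L M K' \<le> integral\<^sup>L M K"
      using int K'_le by (intro integral_mono)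
    then have "integral\<^sup>L M K' = integral\<^sup>L M K"
      using K_min[OF K'] by linarith
    then have "AE x in M. K' x = K x"
      using int K'_le by (intro integral_eq_mono_AE_eq_AE) auto
    with k_nonneg show ?thesis by eventually_elim (auto simp: K'_def)
  qed
  then show ?thesis
    unfolding is_cond_sup_norm_def using K_meas K_bounds K_major by (intro exI[of _ K]) auto
qed

lemma sum_level_indicators_eq_floor:
  fixes t :: real
  assumes "0 \<le> t" and "t \<le> 1"
  shows "(\<Sum>i\<in>{1..n}. if real i \<le> real n * t then 1 else 0 :: real) = of_int \<lfloor>real n * t\<rfloor>"
proof -
  have "real n * t \<le> real n" using assms by (simp add: mult_left_le)
  then have bound: "nat \<lfloor>real n * t\<rfloor> \<le> n" by linarith
  have iff: "real i \<le> real n * t \<longleftrightarrow> i \<le> nat \<lfloor>real n * t\<rfloor>" for i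
    by (meson assms(1) dual_order.trans le_nat_floor of_nat_0_le_iff of_nat_floor of_nat_le_iff
        split_mult_pos_le)
  have "{1..n} \<inter> {i. real i \<le> real n * t} = {1..nat \<lfloor>real n * t\<rfloor>}"
    unfolding iff using bound by auto
  then have "(\<Sum>i\<in>{1..n}. if real i \<le> real n * t then 1 else 0 :: real) = real (nat \<lfloor>real n * t\<rfloor>)"
    by (simp add: sum.If_cases)
  with assms show ?thesis by simp
qed

lemma (in sigma_finite_subalgebra) real_cond_exp_sum_divide:
  assumes "\<And>i. integrable M (u i)"
  shows "AE x in M. real_cond_exp M F (\<lambda>y. (\<Sum>i\<in>I. u i y) / c) x = (\<Sum>i\<in>I. real_cond_exp M F (u i) x) / c"
proof -
  have "AE x in M. real_cond_exp M F (\<lambda>y. (\<Sum>i\<in>I. u i y) / c) x = real_cond_exp M F (\<lambda>y. \<Sum>i\<in>I. u i y) x / c"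
    using assms by (intro real_cond_exp_cdiv Bochner_Integration.integrable_sum)
  moreover have "AE x in M. real_cond_exp M F (\<lambda>y. \<Sum>i\<in>I. u i y) x = (\<Sum>i\<in>I. real_cond_exp M F (u i) x)"
    using assms by (rule real_cond_exp_sum)
  ultimately show ?thesis by eventually_elim simp
qed

locale cond_phi_mixing =
  fixes M C G H :: "'a measure" and \<phi> :: "'a \<Rightarrow> real"
  assumes finite_measure: "finite_measure M"
    and sub_C: "subalgebra M C" and sub_G: "subalgebra M G" and sub_H: "subalgebra M H"
    and phi_mixing: "is_cond_phi_mixing M C G H \<phi>"

sublocale cond_phi_mixing \<subseteq> finite_measure M
  by (rule finite_measure)

sublocale cond_phi_mixing \<subseteq> G: sigma_finite_subalgebra M G
  by (rule finite_measure_sigma_finite_subalgebra[OF finite_measure sub_G])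

sublocale cond_phi_mixing \<subseteq> C: sigma_finite_subalgebra M C
  by (rule finite_measure_sigma_finite_subalgebra[OF finite_measure sub_C])

context cond_phi_mixing
begin

definition cond_exp_gap :: "('a \<Rightarrow> real) \<Rightarrow> 'a \<Rightarrow> real" where
  "cond_exp_gap u x = real_cond_exp M G u x - real_cond_exp M C u x"

lemma cond_exp_gap_diff:
  assumes "integrable M u" and "integrable M v"
  shows "AE x in M. cond_exp_gap (\<lambda>y. u y - v y) x = cond_exp_gap u x - cond_exp_gap v x"
  using G.real_cond_exp_diff[OF assms] C.real_cond_exp_diff[OF assms]
  by eventually_elim (simp add: cond_exp_gap_def)

lemma cond_exp_gap_average:
  assumes "\<And>i. integrable M (u i)"
  shows "AE x in M. cond_exp_gap (\<lambda>y. (\<Sum>i\<in>I. u i y) / c) x = (\<Sum>i\<in>I. cond_exp_gap (u i) x) / c"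
  using G.real_cond_exp_sum_divide[of u I c, OF assms] C.real_cond_exp_sum_divide[of u I c, OF assms]
  by eventually_elim (simp add: cond_exp_gap_def sum_subtractf diff_divide_distrib)

lemma cond_exp_gap_bounded:
  assumes "integrable M u" and "AE x in M. 0 \<le> u x" and "AE x in M. u x \<le> e"
  shows "AE x in M. \<bar>cond_exp_gap u x\<bar> \<le> e"
  using G.real_cond_exp_ge_c[OF assms(1,2)] G.real_cond_exp_le_c[OF assms(1,3)]
    C.real_cond_exp_ge_c[OF assms(1,2)] C.real_cond_exp_le_c[OF assms(1,3)]
  by eventually_elim (auto simp: cond_exp_gap_def)

lemma cond_exp_gap_indicator_le:
  assumes "B \<in> sets H"
  shows "AE x in M. \<bar>cond_exp_gap (indicator B) x\<bar> \<le> \<phi> x"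
proof -
  have "B \<in> sets M" using assms sub_H by (auto simp: subalgebra_def)
  then have "integrable M (indicator B :: 'a \<Rightarrow> real)"
    by (intro integrable_const_bound[where B=1]) auto
  then have "AE x in M. \<bar>cond_exp_gap (indicator B) x\<bar> \<le> 1"
    by (rule cond_exp_gap_bounded) auto
  then obtain k where k: "is_cond_sup_norm M C (cond_exp_gap (indicator B)) k"
    using cond_sup_norm_exists[OF finite_measure sub_C] by blast
  then have "AE x in M. k x \<le> \<phi> x"
    using phi_mixing assms unfolding is_cond_phi_mixing_def cond_exp_gap_def by blast
  moreover have "AE x in M. \<bar>cond_exp_gap (indicator B) x\<bar> \<le> k x"
    using k unfolding is_cond_sup_norm_def by blast
  ultimately show ?thesis by eventually_elim simp
qed

lemma cond_exp_gap_average_indicators_le: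
  assumes "\<And>i. A i \<in> sets H" and "finite I" and "I \<noteq> {}"
  shows "AE x in M. \<bar>cond_exp_gap (\<lambda>y. (\<Sum>i\<in>I. indicator (A i) y) / card I) x\<bar> \<le> \<phi> x"
proof -
  have "A i \<in> sets M" for i using assms(1) sub_H by (auto simp: subalgebra_def)
  then have "integrable M (indicator (A i) :: 'a \<Rightarrow> real)" for i
    by (intro integrable_const_bound[where B=1]) auto
  then have "AE x in M. cond_exp_gap (\<lambda>y. (\<Sum>i\<in>I. indicator (A i) y) / card I) x
      = (\<Sum>i\<in>I. cond_exp_gap (indicator (A i)) x) / card I"
    by (rule cond_exp_gap_average)
  moreover have "AE x in M. \<forall>i\<in>I. \<bar>cond_exp_gap (indicator (A i)) x\<bar> \<le> \<phi> x"
    using cond_exp_gap_indicator_le[OF assms(1)] by (rule AE_finite_allI[OF assms(2)])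
  ultimately show ?thesis
  proof eventually_elim
    case (elim x)
    have "\<bar>\<Sum>i\<in>I. cond_exp_gap (indicator (A i)) x\<bar> \<le> (\<Sum>i\<in>I. \<phi> x)"
      using elim(2) by (intro order_trans[OF sum_abs] sum_mono) auto
    then have "\<bar>\<Sum>i\<in>I. cond_exp_gap (indicator (A i)) x\<bar> / card I \<le> \<phi> x"
      using assms(2,3) by (simp add: divide_le_eq mult.commute)
    with elim(1) show ?case by (simp add: abs_divide)
  qed
qed

lemma cond_exp_gap_unit_interval_approx:
  assumes [measurable]: "h \<in> borel_measurable H" and h_range: "\<And>x. 0 \<le> h x \<and> h x \<le> 1"
    and "0 < n"
  shows "AE x in M. \<bar>cond_exp_gap h x\<bar> \<le> \<phi> x + 1 / real n"
proof -
  have h_meas [measurable]: "h \<in> borel_measurable M" by (rule measurable_from_subalg[OF sub_H]) simp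
  define A where "A i = {y \<in> space M. real i \<le> real n * h y}" for i :: nat
  have A_H: "A i \<in> sets H" for i
  proof -
    have "A i = {y \<in> space H. real i \<le> real n * h y}"
      using sub_H by (simp add: A_def subalgebra_def)
    also have "\<dots> \<in> sets H" by measurable
    finally show ?thesis .
  qed
  define h\<^sub>n where "h\<^sub>n y = (\<Sum>i\<in>{1..n}. indicator (A i) y) / card {1..n}" for y
  have floor_eq: "h\<^sub>n y = of_int \<lfloor>real n * h y\<rfloor> / real n" if "y \<in> space M" for y
  proof -
    have "(\<Sum>i\<in>{1..n}. indicator (A i) y) = (\<Sum>i\<in>{1..n}. if real i \<le> real n * h y then 1 else 0 :: real)"
      using that by (intro sum.cong) (auto simp: A_def)
    then show ?thesis
      unfolding h\<^sub>n_def sum_level_indicators_eq_floor[OF h_range[THEN conjunct1] h_range[THEN conjunct2]]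
      by simp
  qed
  have gap_bounds: "0 \<le> h y - h\<^sub>n y \<and> h y - h\<^sub>n y \<le> 1 / real n" if "y \<in> space M" for y
  proof -
    have "real n * h\<^sub>n y = of_int \<lfloor>real n * h y\<rfloor>"
      using floor_eq[OF that] \<open>0 < n\<close> by simp
    then have "0 \<le> real n * (h y - h\<^sub>n y)" and "real n * (h y - h\<^sub>n y) \<le> 1"
      unfolding right_diff_distrib using floor_correct[of "real n * h y"] by linarith+
    with \<open>0 < n\<close> show ?thesis
      by (auto simp: zero_le_mult_iff pos_le_divide_eq mult.commute)
  qed
  have [measurable]: "A i \<in> sets M" for i
    using A_H sub_H by (auto simp: subalgebra_def)
  have h\<^sub>n_meas [measurable]: "h\<^sub>n \<in> borel_measurable M"
    unfolding h\<^sub>n_def by measurable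
  have int_h: "integrable M h"
    using h_range by (intro integrable_const_bound[where B=1]) auto
  have "\<bar>h\<^sub>n y\<bar> \<le> 1" if "y \<in> space M" for y
  proof -
    have "1 / real n \<le> 1" using \<open>0 < n\<close> by simp
    with gap_bounds[OF that] h_range[of y] show ?thesis by linarith
  qed
  then have int_h\<^sub>n: "integrable M h\<^sub>n"
    by (intro integrable_const_bound[where B=1] AE_I2) auto
  have "AE x in M. \<bar>cond_exp_gap h\<^sub>n x\<bar> \<le> \<phi> x"
    unfolding h\<^sub>n_def using A_H \<open>0 < n\<close> by (intro cond_exp_gap_average_indicators_le) auto
  moreover have "AE x in M. \<bar>cond_exp_gap (\<lambda>y. h y - h\<^sub>n y) x\<bar> \<le> 1 / real n"
    using gap_bounds by (intro cond_exp_gap_bounded AE_I2 Bochner_Integration.integrable_diff int_h int_h\<^sub>n) auto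
  moreover note cond_exp_gap_diff[OF int_h int_h\<^sub>n]
  ultimately show ?thesis by eventually_elim linarith
qed

lemma cond_exp_gap_unit_interval_le:
  assumes "h \<in> borel_measurable H" and "\<And>x. 0 \<le> h x \<and> h x \<le> 1"
  shows "AE x in M. \<bar>cond_exp_gap h x\<bar> \<le> \<phi> x"
proof -
  have "AE x in M. \<forall>n. \<bar>cond_exp_gap h x\<bar> \<le> \<phi> x + 1 / real (Suc n)"
    unfolding AE_all_countable using assms by (intro allI cond_exp_gap_unit_interval_approx) auto
  then show ?thesis
  proof eventually_elim
    case (elim x)
    show ?case
    proof (rule field_le_epsilon)
      fix e :: real assume "0 < e"
      then obtain n where "inverse (real (Suc n)) < e" using reals_Archimedean by blast
      with elim[rule_format, of n] show "\<bar>cond_exp_gap h x\<bar> \<le> \<phi> x + e"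
        by (simp add: inverse_eq_divide)
    qed
  qed
qed

lemma cond_exp_gap_le:
  assumes [measurable]: "h \<in> borel_measurable H" and h_bounded: "\<And>x. \<bar>h x\<bar> \<le> 1"
  shows "AE x in M. \<bar>cond_exp_gap h x\<bar> \<le> 2 * \<phi> x"
proof -
  have [measurable]: "h \<in> borel_measurable M" by (rule measurable_from_subalg[OF sub_H]) simp
  have int: "integrable M (\<lambda>x. max 0 (h x))" "integrable M (\<lambda>x. max 0 (- h x))"
    using h_bounded by (auto intro!: integrable_const_bound[where B=1] simp: abs_le_iff)
  have "AE x in M. \<bar>cond_exp_gap (\<lambda>x. max 0 (h x)) x\<bar> \<le> \<phi> x"
    using h_bounded by (intro cond_exp_gap_unit_interval_le) (auto simp: abs_le_iff)
  moreover have "AE x in M. \<bar>cond_exp_gap (\<lambda>x. max 0 (- h x)) x\<bar> \<le> \<phi> x"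
    using h_bounded by (intro cond_exp_gap_unit_interval_le) (auto simp: abs_le_iff)
  moreover have "h = (\<lambda>x. max 0 (h x) - max 0 (- h x))" by auto
  note cond_exp_gap_diff[OF int, folded this]
  ultimately show ?thesis by eventually_elim linarith
qed

end

lemma (in sigma_finite_subalgebra) gen_cond_exp_factor:
  assumes [measurable]: "g \<in> borel_measurable F" "f \<in> borel_measurable M"
    and "integrable M h" and g_nonneg: "AE x in M. 0 \<le> g x" and f_eq: "AE x in M. f x = g x * h x"
  shows "AE x in M. gen_cond_exp M F g f x = g x * real_cond_exp M F h x"
proof -
  have [measurable]: "g \<in> borel_measurable M" by (rule measurable_from_subalg[OF subalg]) simp
  have h_meas [measurable]: "h \<in> borel_measurable M" using assms(3) by blast
  \<comment> \<open>Cutting \<open>f\<close> where \<open>g > n\<close> multiplies \<open>h\<close> by the bounded \<open>F\<close>-measurable \<open>g\<^sub>n\<close>, which factors out.\<close>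
  define g\<^sub>n where "g\<^sub>n n x = g x * indicator {y. g y \<le> real n} x" for n :: nat and x
  have g\<^sub>n_meas [measurable]: "g\<^sub>n n \<in> borel_measurable F" for n unfolding g\<^sub>n_def by measurable
  have int: "integrable M (\<lambda>x. g\<^sub>n n x * h x)" for n
  proof (rule Bochner_Integration.integrable_bound)
    show "integrable M (\<lambda>x. real n * h x)" using assms(3) by simp
    show "AE x in M. norm (g\<^sub>n n x * h x) \<le> norm (real n * h x)"
      using g_nonneg by eventually_elim (auto simp: g\<^sub>n_def indicator_def abs_mult intro: mult_right_mono)
  qed (simp add: g\<^sub>n_def)
  have "AE x in M. \<forall>n. real_cond_exp M F (\<lambda>y. f y * indicator {y. g y \<le> real n} y) x = g\<^sub>n n x * real_cond_exp M F h x"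
    unfolding AE_all_countable
  proof (intro allI)
    fix n
    have "AE x in M. f x * indicator {y. g y \<le> real n} x = g\<^sub>n n x * h x"
      using f_eq by eventually_elim (simp add: g\<^sub>n_def)
    then have "AE x in M. real_cond_exp M F (\<lambda>y. f y * indicator {y. g y \<le> real n} y) x
        = real_cond_exp M F (\<lambda>y. g\<^sub>n n y * h y) x"
      by (rule real_cond_exp_cong) (use int in auto)
    with real_cond_exp_mult[OF g\<^sub>n_meas h_meas int]
    show "AE x in M. real_cond_exp M F (\<lambda>y. f y * indicator {y. g y \<le> real n} y) x
        = g\<^sub>n n x * real_cond_exp M F h x"
      by eventually_elim simp_all
  qed
  then show ?thesis
  proof eventually_elim
    case (elim x)
    obtain N where "g x \<le> real N" using real_arch_simple by blast
    then have "g\<^sub>n n x = g x" if "N \<le> n" for n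
      using that by (simp add: g\<^sub>n_def indicator_def)
    then have "eventually (\<lambda>n. g\<^sub>n n x = g x) sequentially"
      by (auto simp: eventually_sequentially)
    then have "(\<lambda>n. g\<^sub>n n x * real_cond_exp M F h x) \<longlonglongrightarrow> g x * real_cond_exp M F h x"
      by (rule tendsto_eventually[OF eventually_mono]) simp
    then show ?case
      unfolding gen_cond_exp_def elim[rule_format] by (rule limI)
  qed
qed

lemma bounded_factor_exists:
  fixes f g :: "'a \<Rightarrow> real"
  assumes [measurable]: "f \<in> borel_measurable N" "g \<in> borel_measurable N"
    and f_le_g: "AE x in M. \<bar>f x\<bar> \<le> g x"
  shows "\<exists>h \<in> borel_measurable N. (\<forall>x. \<bar>h x\<bar> \<le> 1) \<and> (AE x in M. f x = g x * h x)"
proof (intro bexI conjI allI)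
  define h where "h x = (if 0 < g x then max (-1) (min 1 (f x / g x)) else 0)" for x
  show "h \<in> borel_measurable N" unfolding h_def by measurable
  show "\<bar>h x\<bar> \<le> 1" for x by (simp add: h_def abs_le_iff)
  show "AE x in M. f x = g x * h x"
    using f_le_g
  proof eventually_elim
    case (elim x)
    show ?case
    proof (cases "0 < g x")
      case True
      with elim have "\<bar>f x / g x\<bar> \<le> 1" by (simp add: abs_divide)
      then have "- 1 \<le> f x / g x" and "f x / g x \<le> 1" by linarith+
      with True have "h x = f x / g x" unfolding h_def by (metis max.absorb2 min.absorb2)
      with True show ?thesis by simp
    qed (use elim in \<open>simp add: h_def\<close>)
  qed
qed

theorem corollary4p11:
  fixes M C G H :: "'a measure" and f g \<phi> :: "'a \<Rightarrow> real"
  assumes "prob_space M"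
    and "subalgebra M C" and "subalgebra M G" and "subalgebra M H"
    and "sets C \<subseteq> sets G" and "sets C \<subseteq> sets H"
    and "f \<in> borel_measurable H"
    and "g \<in> borel_measurable C"
    and "AE x in M. \<bar>f x\<bar> \<le> g x"
    and "is_cond_phi_mixing M C G H \<phi>"
  shows "AE x in M. \<bar>gen_cond_exp M G g f x - gen_cond_exp M C g f x\<bar> \<le> 2 * \<phi> x * g x"
proof -
  interpret prob_space M by fact
  interpret cond_phi_mixing M C G H \<phi>
    using finite_measure_axioms assms(2-4,10) by unfold_locales
  have "subalgebra G C" and "subalgebra H C"
    using assms(2-6) by (auto simp: subalgebra_def)
  then have g_G: "g \<in> borel_measurable G" and g_H: "g \<in> borel_measurable H"
    using measurable_from_subalg assms(8) by blast+
  obtain h where h_H: "h \<in> borel_measurable H" and h_bounded: "\<And>x. \<bar>h x\<bar> \<le> 1"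
    and f_eq: "AE x in M. f x = g x * h x"
    using bounded_factor_exists[OF assms(7) g_H assms(9)] by blast
  have f_M: "f \<in> borel_measurable M" by (rule measurable_from_subalg[OF sub_H assms(7)])
  have int_h: "integrable M h"
    using measurable_from_subalg[OF sub_H h_H] h_bounded by (intro integrable_const_bound[where B=1]) auto
  have g_nonneg: "AE x in M. 0 \<le> g x" using assms(9) by eventually_elim auto
  note G.gen_cond_exp_factor[OF g_G f_M int_h g_nonneg f_eq] C.gen_cond_exp_factor[OF assms(8) f_M int_h g_nonneg f_eq]
    cond_exp_gap_le[OF h_H h_bounded] g_nonneg
  then show ?thesis
  proof eventually_elim
    case (elim x)
    then have "\<bar>gen_cond_exp M G g f x - gen_cond_exp M C g f x\<bar> = g x * \<bar>cond_exp_gap h x\<bar>"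
      by (simp add: cond_exp_gap_def abs_mult flip: right_diff_distrib)
    also have "\<dots> \<le> g x * (2 * \<phi> x)" using elim by (intro mult_left_mono) auto
    finally show ?case by (simp add: mult_ac)
  qed
qed

end
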